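(* Almost every $n$-vertex graph is such that the multiset of its induced subgraphs with $3\log_2 n$ vertices is sufficient to determine it up to isomorphism. In other words, for almost every $n$-vertex graph $G$, the collection $\{(F, C_G(F))\}_{F\in\Gamma_{3\log_2 n}}$ determines $G$ up to isomorphism: if $G'$ is any $n$-vertex graph with $C_{G'}(F)=C_G(F)$ for every $F\in\Gamma_{3\log_2 n}$, then $G'\cong G$.
   Context: Graphs are finite, simple, undirected; all subgraphs are induced subgraphs. $\Gamma_m$ denotes the set of all (isomorphism types of) graphs on $m$ vertices. For graphs $F$ and $G$, the multiplicity $C_G(F)$ is the number of induced subgraphs of $G$ isomorphic to $F$. "Almost every $n$-vertex graph has property $Q$" means: in the random graph on $n$ labeled vertices where each edge is present independently with probability $1/2$, the probability that $G$ has $Q$ tends to $1$ as $n\to\infty$. *)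

theory Defs
  imports Complex_Main
begin

(* A labelled simple graph on vertex set {0..<n} is a set of 2-element subsets of {0..<n}. *)
definition all_pairs :: "nat \<Rightarrow> nat set set" where
  "all_pairs n = {e. e \<subseteq> {0..<n} \<and> card e = 2}"

(* All labelled graphs on {0..<n}; the G(n,1/2) random graph is uniform on this set. *)
definition labeled_graphs :: "nat \<Rightarrow> nat set set set" where
  "labeled_graphs n = Pow (all_pairs n)"

definition graph_iso :: "'a set \<Rightarrow> 'a set set \<Rightarrow> 'b set \<Rightarrow> 'b set set \<Rightarrow> bool" where
  "graph_iso V E W F \<longleftrightarrow>
     (\<exists>f. bij_betw f V W \<and> (\<forall>u\<in>V. \<forall>v\<in>V. ({u, v} \<in> E \<longleftrightarrow> {f u, f v} \<in> F)))"

definition induced :: "'a set set \<Rightarrow> 'a set \<Rightarrow> 'a set set" where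
  "induced E S = {e \<in> E. e \<subseteq> S}"

definition ind_count :: "nat \<Rightarrow> nat set set \<Rightarrow> nat \<Rightarrow> nat set set \<Rightarrow> nat" where
  "ind_count n E m EF =
     card {S. S \<subseteq> {0..<n} \<and> card S = m \<and> graph_iso S (induced E S) {0..<m} EF}"

definition determined_by_deck :: "nat \<Rightarrow> nat \<Rightarrow> nat set set \<Rightarrow> bool" where
  "determined_by_deck n m E \<longleftrightarrow>
     (\<forall>E' \<in> labeled_graphs n.
        (\<forall>EF \<in> labeled_graphs m. ind_count n E' m EF = ind_count n E m EF)
        \<longrightarrow> graph_iso {0..<n} E {0..<n} E')"

end

theory Submission
  imports Defs "HOL-Library.FuncSet" "HOL-Library.Nat_Bijection" "HOL-Real_Asymp.Real_Asymp"
begin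

text \<open>Let \<open>B = {0..<k}\<close> with \<open>k = \<lfloor>3 log\<^sub>2 n\<rfloor> - 2\<close>. Call \<open>B\<close> rigid in \<open>G\<close> if the identity is the
  only embedding of \<open>G[B]\<close> into \<open>G\<close> as an induced subgraph, and separating if the vertices outside
  \<open>B\<close> have pairwise distinct neighbourhoods in \<open>B\<close>. If both hold and \<open>G'\<close> has the same
  \<open>(k+2)\<close>-deck as \<open>G\<close>, the deck yields an embedding \<open>\<psi>\<close> of \<open>G[B]\<close> into \<open>G'\<close> and, for any two
  vertices \<open>w\<^sub>1, w\<^sub>2\<close> outside \<open>\<psi>(B)\<close>, a copy of \<open>G'[\<psi>(B) \<union> {w\<^sub>1, w\<^sub>2}]\<close> in \<open>G\<close>. By rigidity this copy
  inverts \<open>\<psi>\<close> on \<open>B\<close>, and by separation it sends each \<open>w\<^sub>i\<close> to the unique vertex with the same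
  neighbourhood in \<open>B\<close>; so all these local isomorphisms are restrictions of one isomorphism
  \<open>G' \<cong> G\<close>.

  Both properties fail only for a vanishing fraction of graphs. Two vertices outside \<open>B\<close> agree
  on \<open>B\<close> with probability \<open>2 ^ (-k)\<close>. A non-identity injection \<open>\<sigma>\<close> of \<open>B\<close> that preserves adjacency
  forces at least \<open>(k - 2)/4\<close> independent edge coincidences per point it moves, twice as many
  per point it moves out of \<open>B\<close>; summing over all \<open>\<sigma>\<close> bounds the non-rigid fraction by
  \<open>(1 + k a + n a\<^sup>2) ^ k - 1\<close> with \<open>a = 2 powr (-(k - 2)/4)\<close>, which tends to \<open>0\<close>.\<close>

section \<open>Isomorphisms between induced subgraphs\<close>

definition iso_betw :: "('a \<Rightarrow> 'b) \<Rightarrow> 'a set \<Rightarrow> 'a set set \<Rightarrow> 'b set \<Rightarrow> 'b set set \<Rightarrow> bool" where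
  "iso_betw f V E W F \<longleftrightarrow> bij_betw f V W \<and> (\<forall>u\<in>V. \<forall>v\<in>V. {u, v} \<in> E \<longleftrightarrow> {f u, f v} \<in> F)"

lemma graph_iso_iff_iso_betw: "graph_iso V E W F \<longleftrightarrow> (\<exists>f. iso_betw f V E W F)"
  unfolding graph_iso_def iso_betw_def by blast

lemma iso_betw_imp_bij_betw: "iso_betw f V E W F \<Longrightarrow> bij_betw f V W"
  unfolding iso_betw_def by blast

lemma iso_betw_edge_iff:
  "iso_betw f V E W F \<Longrightarrow> u \<in> V \<Longrightarrow> v \<in> V \<Longrightarrow> {u, v} \<in> E \<longleftrightarrow> {f u, f v} \<in> F"
  unfolding iso_betw_def by blast

lemma iso_betw_image: "iso_betw f V E W F \<Longrightarrow> f ` V = W"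
  unfolding iso_betw_def bij_betw_def by blast

lemma iso_betw_inv_into:
  assumes "iso_betw f V E W F"
  shows "iso_betw (inv_into V f) W F V E"
proof -
  have bij: "bij_betw f V W"
    using assms by (rule iso_betw_imp_bij_betw)
  have "{u, v} \<in> F \<longleftrightarrow> {inv_into V f u, inv_into V f v} \<in> E" if "u \<in> W" "v \<in> W" for u v
    using iso_betw_edge_iff[OF assms, of "inv_into V f u" "inv_into V f v"] that bij
    by (simp add: bij_betw_inv_into_right bij_betw_apply[OF bij_betw_inv_into])
  then show ?thesis
    unfolding iso_betw_def using bij_betw_inv_into[OF bij] by blast
qed

lemma iso_betw_trans:
  assumes "iso_betw f U E V F" "iso_betw g V F W G"
  shows "iso_betw (g \<circ> f) U E W G"
proof -
  have "f u \<in> V" if "u \<in> U" for u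
    using assms that unfolding iso_betw_def by (auto dest: bij_betw_apply)
  then show ?thesis
    using assms unfolding iso_betw_def by (auto intro: bij_betw_trans)
qed

lemma iso_betw_subset:
  assumes "iso_betw f V E W F" "A \<subseteq> V"
  shows "iso_betw f A E (f ` A) F"
  using assms unfolding iso_betw_def by (auto intro: bij_betw_subset)

lemma iso_betw_cong:
  assumes "iso_betw f V E W F" "\<And>x. x \<in> V \<Longrightarrow> g x = f x"
  shows "iso_betw g V E W F"
  using assms bij_betw_cong[of V g f W] unfolding iso_betw_def by auto

lemma ex_iso_betw_labeled_graph:
  assumes "E \<in> labeled_graphs n" "finite S" "card S = m"
  obtains f EF where "EF \<in> labeled_graphs m" "iso_betw f S E {0..<m} EF"
proof -
  obtain f where f: "bij_betw f S {0..<m}"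
    using ex_bij_betw_finite_nat[OF assms(2)] assms(3) by auto
  define EF where "EF = (\<lambda>e. f ` e) ` {e \<in> E. e \<subseteq> S}"
  have "card (f ` e) = 2" "f ` e \<subseteq> {0..<m}" if "e \<in> E" "e \<subseteq> S" for e
  proof -
    have "card e = 2"
      using that assms(1) by (auto simp: labeled_graphs_def all_pairs_def)
    then show "card (f ` e) = 2"
      using that card_image[OF inj_on_subset[OF bij_betw_imp_inj_on[OF f]]] by metis
    show "f ` e \<subseteq> {0..<m}"
      using that bij_betw_imp_surj_on[OF f] by blast
  qed
  then have "EF \<in> labeled_graphs m"
    unfolding EF_def labeled_graphs_def all_pairs_def by auto
  moreover have "{u, v} \<in> E \<longleftrightarrow> {f u, f v} \<in> EF" if "u \<in> S" "v \<in> S" for u v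
  proof
    assume "{f u, f v} \<in> EF"
    then obtain e where "e \<in> E" "e \<subseteq> S" "f ` e = f ` {u, v}"
      unfolding EF_def by auto
    then show "{u, v} \<in> E"
      using inj_on_image_eq_iff[OF bij_betw_imp_inj_on[OF f]] that by (metis empty_subsetI insert_subset)
  next
    assume "{u, v} \<in> E"
    then show "{f u, f v} \<in> EF"
      unfolding EF_def using that by (intro image_eqI[of _ _ "{u, v}"]) auto
  qed
  ultimately show ?thesis
    using that f unfolding iso_betw_def by blast
qed

lemma ind_count_pos_iff:
  assumes "EF \<in> labeled_graphs m"
  shows "0 < ind_count n E m EF \<longleftrightarrow>
    (\<exists>T f. T \<subseteq> {0..<n} \<and> card T = m \<and> iso_betw f T E {0..<m} EF)"
proof -
  have "finite {S. S \<subseteq> {0..<n} \<and> card S = m \<and> graph_iso S (induced E S) {0..<m} EF}"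
    by (rule finite_subset[of _ "Pow {0..<n}"]) auto
  moreover have "graph_iso T (induced E T) {0..<m} EF \<longleftrightarrow> (\<exists>f. iso_betw f T E {0..<m} EF)" for T
    unfolding graph_iso_def iso_betw_def induced_def by auto
  ultimately show ?thesis
    unfolding ind_count_def by (auto simp: card_gt_0_iff)
qed

lemma ex_copy_if_same_deck:
  assumes deck: "\<forall>EF\<in>labeled_graphs m. ind_count n E m EF = ind_count n E' m EF"
    and E: "E \<in> labeled_graphs n" and S: "S \<subseteq> {0..<n}" "card S = m"
  obtains f T where "T \<subseteq> {0..<n}" "iso_betw f S E T E'"
proof -
  have "finite S"
    using S(1) finite_subset by blast
  then obtain h EF where EF: "EF \<in> labeled_graphs m" and h: "iso_betw h S E {0..<m} EF"
    using ex_iso_betw_labeled_graph[OF E] S(2) by metis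
  then have "0 < ind_count n E m EF"
    using ind_count_pos_iff S by blast
  then obtain T g where T: "T \<subseteq> {0..<n}" and g: "iso_betw g T E' {0..<m} EF"
    using ind_count_pos_iff[OF EF] deck EF by auto
  have "iso_betw (inv_into T g \<circ> h) S E T E'"
    using iso_betw_trans[OF h iso_betw_inv_into[OF g]] .
  then show ?thesis
    using that T by blast
qed

section \<open>Reconstruction from a rigid, separating prefix\<close>

text \<open>The distinguished vertex set is the prefix \<open>{0..<k}\<close>; as the uniform distribution on labelled
  graphs is invariant under relabelling, nothing is lost by fixing it.\<close>

definition prefix_nbhd :: "nat set set \<Rightarrow> nat \<Rightarrow> nat \<Rightarrow> nat set" where
  "prefix_nbhd E k u = {b \<in> {0..<k}. {b, u} \<in> E}"

definition embeds_prefix :: "nat set set \<Rightarrow> nat \<Rightarrow> (nat \<Rightarrow> nat) \<Rightarrow> bool" where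
  "embeds_prefix E k \<sigma> \<longleftrightarrow> (\<forall>x<k. \<forall>y<k. {x, y} \<in> E \<longleftrightarrow> {\<sigma> x, \<sigma> y} \<in> E)"

definition rigid_prefix :: "nat \<Rightarrow> nat \<Rightarrow> nat set set \<Rightarrow> bool" where
  "rigid_prefix n k E \<longleftrightarrow>
     (\<forall>\<sigma>. \<sigma> ` {0..<k} \<subseteq> {0..<n} \<longrightarrow> inj_on \<sigma> {0..<k} \<longrightarrow> embeds_prefix E k \<sigma> \<longrightarrow> (\<forall>x<k. \<sigma> x = x))"

definition separating_prefix :: "nat \<Rightarrow> nat \<Rightarrow> nat set set \<Rightarrow> bool" where
  "separating_prefix n k E \<longleftrightarrow> inj_on (prefix_nbhd E k) {k..<n}"

lemma rigid_prefixD: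
  assumes "rigid_prefix n k E" "iso_betw \<sigma> {0..<k} E T E" "T \<subseteq> {0..<n}" "x < k"
  shows "\<sigma> x = x"
proof -
  have "\<sigma> ` {0..<k} \<subseteq> {0..<n}" "inj_on \<sigma> {0..<k}"
    using assms(2,3) iso_betw_image[OF assms(2)] iso_betw_imp_bij_betw[OF assms(2)]
    by (auto simp: bij_betw_def)
  moreover have "embeds_prefix E k \<sigma>"
    using iso_betw_edge_iff[OF assms(2)] unfolding embeds_prefix_def by simp
  ultimately show ?thesis
    using assms(1,4) unfolding rigid_prefix_def by blast
qed

locale deck_reconstruction =
  fixes n k :: nat and E E' :: "nat set set" and \<psi> :: "nat \<Rightarrow> nat" and B' :: "nat set"
  assumes graph: "E' \<in> labeled_graphs n"
    and size: "k + 2 \<le> n"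
    and rigid: "rigid_prefix n k E"
    and separating: "separating_prefix n k E"
    and deck: "\<forall>EF\<in>labeled_graphs (k + 2). ind_count n E' (k + 2) EF = ind_count n E (k + 2) EF"
    and anchor: "iso_betw \<psi> {0..<k} E B' E'" "B' \<subseteq> {0..<n}"
begin

definition match :: "nat \<Rightarrow> nat" where
  "match w = (THE u. u \<in> {k..<n} \<and> prefix_nbhd E k u = {b \<in> {0..<k}. {\<psi> b, w} \<in> E'})"

lemma card_anchor: "card B' = k"
  using bij_betw_same_card[OF iso_betw_imp_bij_betw[OF anchor(1)]] by simp

lemma match_eqI:
  assumes "u \<in> {k..<n}" "prefix_nbhd E k u = {b \<in> {0..<k}. {\<psi> b, w} \<in> E'}"
  shows "match w = u"
  unfolding match_def
proof (rule the_equality)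
  fix u' assume "u' \<in> {k..<n} \<and> prefix_nbhd E k u' = {b \<in> {0..<k}. {\<psi> b, w} \<in> E'}"
  then show "u' = u"
    using inj_onD[OF separating[unfolded separating_prefix_def]] assms by metis
qed (use assms in blast)

text \<open>The deck provides a copy of \<open>E'[T']\<close> in \<open>E\<close>; composed with \<open>\<psi>\<close> it embeds the prefix
  into \<open>E\<close>, so by rigidity it undoes \<open>\<psi>\<close>.\<close>
lemma anchored_copy:
  assumes "B' \<subseteq> T'" "T' \<subseteq> {0..<n}" "card T' = k + 2"
  obtains \<phi> where "iso_betw \<phi> T' E' (\<phi> ` T') E" "\<phi> ` T' \<subseteq> {0..<n}" "\<forall>b<k. \<phi> (\<psi> b) = b"
proof -
  obtain \<phi> T where T: "T \<subseteq> {0..<n}" and \<phi>: "iso_betw \<phi> T' E' T E"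
    using ex_copy_if_same_deck[of "k + 2" n E' E] deck graph assms(2,3) by metis
  have "iso_betw (\<phi> \<circ> \<psi>) {0..<k} E (\<phi> ` B') E"
    using iso_betw_trans[OF anchor(1) iso_betw_subset[OF \<phi> assms(1)]] .
  moreover have "\<phi> ` B' \<subseteq> {0..<n}"
    using iso_betw_image[OF \<phi>] assms(1) T by blast
  ultimately have "\<forall>b<k. \<phi> (\<psi> b) = b"
    using rigid_prefixD[OF rigid] by (metis comp_apply)
  then show ?thesis
    using that iso_betw_subset[OF \<phi> order_refl] iso_betw_image[OF \<phi>] T by blast
qed

lemma two_point_copy:
  assumes P: "P \<subseteq> {0..<n} - B'" "card P = 2"
  obtains \<phi> where "iso_betw \<phi> (B' \<union> P) E' (\<phi> ` (B' \<union> P)) E" "\<forall>b<k. \<phi> (\<psi> b) = b"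
    "\<forall>w\<in>P. \<phi> w \<in> {k..<n} \<and> \<phi> w = match w"
proof -
  have "finite B'" "finite P" "B' \<inter> P = {}"
    using anchor(2) P(1) finite_subset by blast+
  then have "card (B' \<union> P) = k + 2"
    using P(2) card_anchor card_Un_disjoint[of B' P] by simp
  moreover have "B' \<union> P \<subseteq> {0..<n}"
    using anchor(2) P(1) by blast
  ultimately obtain \<phi> where \<phi>: "iso_betw \<phi> (B' \<union> P) E' (\<phi> ` (B' \<union> P)) E"
    and V: "\<phi> ` (B' \<union> P) \<subseteq> {0..<n}" and \<phi>\<psi>: "\<forall>b<k. \<phi> (\<psi> b) = b"
    using anchored_copy[of "B' \<union> P"] by blast
  have "\<phi> w \<in> {k..<n} \<and> \<phi> w = match w" if w: "w \<in> P" for w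
  proof -
    have "\<phi> w \<notin> {0..<k}"
    proof
      assume "\<phi> w \<in> {0..<k}"
      then have "\<phi> (\<psi> (\<phi> w)) = \<phi> w" "\<psi> (\<phi> w) \<in> B'"
        using \<phi>\<psi> iso_betw_image[OF anchor(1)] by auto
      moreover have "w \<notin> B'"
        using w P(1) by blast
      ultimately show False
        using inj_onD[OF bij_betw_imp_inj_on[OF iso_betw_imp_bij_betw[OF \<phi>]], of "\<psi> (\<phi> w)" w] w
        by auto
    qed
    then have \<phi>w: "\<phi> w \<in> {k..<n}"
      using V w by auto
    have "{b, \<phi> w} \<in> E \<longleftrightarrow> {\<psi> b, w} \<in> E'" if "b < k" for b
      using iso_betw_edge_iff[OF \<phi>, of "\<psi> b" w] \<phi>\<psi> that w iso_betw_image[OF anchor(1)] by auto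
    then have "prefix_nbhd E k (\<phi> w) = {b \<in> {0..<k}. {\<psi> b, w} \<in> E'}"
      unfolding prefix_nbhd_def by auto
    with \<phi>w show ?thesis
      using match_eqI by simp
  qed
  then show ?thesis
    using that \<phi> \<phi>\<psi> by blast
qed

lemma ex_two_point_cover:
  assumes "C \<subseteq> {0..<n} - B'" "card C \<le> 2"
  obtains P where "C \<subseteq> P" "P \<subseteq> {0..<n} - B'" "card P = 2"
proof -
  have "card ({0..<n} - B') = n - k"
    using card_Diff_subset[OF finite_subset[OF anchor(2)] anchor(2)] card_anchor by simp
  then have "2 \<le> card ({0..<n} - B')"
    using size by simp
  then show ?thesis
    using exists_subset_between[OF assms(2) _ assms(1)] that by blast
qed

lemma bij_betw_match: "bij_betw match ({0..<n} - B') {k..<n}"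
proof -
  have into: "match w \<in> {k..<n}" if w: "w \<in> {0..<n} - B'" for w
  proof -
    have "{w} \<subseteq> {0..<n} - B'" "card {w} \<le> 2"
      using w by auto
    then obtain P where P: "{w} \<subseteq> P" "P \<subseteq> {0..<n} - B'" "card P = 2"
      by (rule ex_two_point_cover)
    obtain \<phi> where "\<forall>w\<in>P. \<phi> w \<in> {k..<n} \<and> \<phi> w = match w"
      using two_point_copy[OF P(2,3)] .
    then show ?thesis
      using P(1) by auto
  qed
  have inj: "inj_on match ({0..<n} - B')"
  proof (rule inj_onI, rule ccontr)
    fix w1 w2 assume w: "w1 \<in> {0..<n} - B'" "w2 \<in> {0..<n} - B'" and eq: "match w1 = match w2"
      and ne: "w1 \<noteq> w2"
    have "{w1, w2} \<subseteq> {0..<n} - B'" "card {w1, w2} = 2"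
      using w ne by auto
    then obtain \<phi> where \<phi>: "iso_betw \<phi> (B' \<union> {w1, w2}) E' (\<phi> ` (B' \<union> {w1, w2})) E"
      and match: "\<forall>w\<in>{w1, w2}. \<phi> w \<in> {k..<n} \<and> \<phi> w = match w"
      by (rule two_point_copy)
    have "\<phi> w1 = \<phi> w2"
      using match eq by simp
    then show False
      using inj_onD[OF bij_betw_imp_inj_on[OF iso_betw_imp_bij_betw[OF \<phi>]]] ne by blast
  qed
  have "card (match ` ({0..<n} - B')) = card {k..<n}"
    using card_image[OF inj] card_Diff_subset[OF finite_subset[OF anchor(2)] anchor(2)] card_anchor by simp
  moreover have "match ` ({0..<n} - B') \<subseteq> {k..<n}"
    using into by blast
  ultimately have "match ` ({0..<n} - B') = {k..<n}"
    by (simp add: card_subset_eq)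
  with inj show ?thesis
    unfolding bij_betw_def by blast
qed

definition reconstruction :: "nat \<Rightarrow> nat" where
  "reconstruction v = (if v \<in> B' then inv_into {0..<k} \<psi> v else match v)"

lemma bij_betw_reconstruction: "bij_betw reconstruction {0..<n} {0..<n}"
proof -
  have "bij_betw (inv_into {0..<k} \<psi>) B' {0..<k}"
    using bij_betw_inv_into[OF iso_betw_imp_bij_betw[OF anchor(1)]] .
  then have "bij_betw reconstruction B' {0..<k}"
    by (rule bij_betw_cong[THEN iffD2, rotated]) (simp add: reconstruction_def)
  moreover have "bij_betw reconstruction ({0..<n} - B') {k..<n}"
    using bij_betw_match by (rule bij_betw_cong[THEN iffD2, rotated]) (simp add: reconstruction_def)
  ultimately have "bij_betw reconstruction (B' \<union> ({0..<n} - B')) ({0..<k} \<union> {k..<n})"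
    by (rule bij_betw_combine) auto
  moreover have "B' \<union> ({0..<n} - B') = {0..<n}" "{0..<k} \<union> {k..<n} = {0..<n}"
    using anchor(2) size by auto
  ultimately show ?thesis
    by simp
qed

lemma two_point_copy_reconstruction:
  assumes P: "P \<subseteq> {0..<n} - B'" "card P = 2"
  shows "iso_betw reconstruction (B' \<union> P) E' (reconstruction ` (B' \<union> P)) E"
proof -
  obtain \<phi> where \<phi>: "iso_betw \<phi> (B' \<union> P) E' (\<phi> ` (B' \<union> P)) E"
    and \<phi>\<psi>: "\<forall>b<k. \<phi> (\<psi> b) = b" and \<phi>P: "\<forall>w\<in>P. \<phi> w \<in> {k..<n} \<and> \<phi> w = match w"
    using two_point_copy[OF P] .
  have "reconstruction x = \<phi> x" if x: "x \<in> B' \<union> P" for x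
  proof (cases "x \<in> B'")
    case True
    then obtain b where "b < k" "x = \<psi> b"
      using iso_betw_image[OF anchor(1)] by auto
    then show ?thesis
      using \<phi>\<psi> True bij_betw_inv_into_left[OF iso_betw_imp_bij_betw[OF anchor(1)]]
      by (simp add: reconstruction_def)
  next
    case False
    then show ?thesis
      using x \<phi>P by (simp add: reconstruction_def)
  qed
  then have "reconstruction ` (B' \<union> P) = \<phi> ` (B' \<union> P)"
    by (rule image_cong[OF refl])
  then show ?thesis
    using iso_betw_cong[OF \<phi>] \<open>\<And>x. x \<in> B' \<union> P \<Longrightarrow> reconstruction x = \<phi> x\<close> by simp
qed

lemma iso_betw_reconstruction: "iso_betw reconstruction {0..<n} E' {0..<n} E"
proof -
  have "{u, v} \<in> E' \<longleftrightarrow> {reconstruction u, reconstruction v} \<in> E"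
    if "u \<in> {0..<n}" "v \<in> {0..<n}" for u v
  proof -
    have "card ({u, v} - B') \<le> card {u, v}"
      by (rule card_mono) auto
    also have "\<dots> \<le> 2"
      by (cases "u = v") auto
    finally have "card ({u, v} - B') \<le> 2" .
    moreover have "{u, v} - B' \<subseteq> {0..<n} - B'"
      using that by auto
    ultimately obtain P where P: "{u, v} - B' \<subseteq> P" "P \<subseteq> {0..<n} - B'" "card P = 2"
      using ex_two_point_cover by blast
    then have "u \<in> B' \<union> P" "v \<in> B' \<union> P"
      by auto
    then show ?thesis
      using iso_betw_edge_iff[OF two_point_copy_reconstruction[OF P(2,3)]] by blast
  qed
  then show ?thesis
    using bij_betw_reconstruction unfolding iso_betw_def by blast
qed

lemma graph_iso: "graph_iso {0..<n} E {0..<n} E'"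
  using iso_betw_inv_into[OF iso_betw_reconstruction] graph_iso_iff_iso_betw by blast

end

lemma determined_by_deck_if_rigid_separating:
  assumes E: "E \<in> labeled_graphs n" and size: "k + 2 \<le> n"
    and rigid: "rigid_prefix n k E" and separating: "separating_prefix n k E"
  shows "determined_by_deck n (k + 2) E"
  unfolding determined_by_deck_def
proof (intro ballI impI)
  fix E' assume E': "E' \<in> labeled_graphs n"
    and deck: "\<forall>EF\<in>labeled_graphs (k + 2). ind_count n E' (k + 2) EF = ind_count n E (k + 2) EF"
  have "\<forall>EF\<in>labeled_graphs (k + 2). ind_count n E (k + 2) EF = ind_count n E' (k + 2) EF"
    using deck by simp
  then obtain \<psi> T where "T \<subseteq> {0..<n}" and \<psi>: "iso_betw \<psi> {0..<k + 2} E T E'"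
    by (rule ex_copy_if_same_deck[OF _ E, where S = "{0..<k + 2}"]) (use size in auto)
  have prefix: "{0..<k} \<subseteq> {0..<k + 2}"
    by simp
  then have "\<psi> ` {0..<k} \<subseteq> {0..<n}"
    using iso_betw_image[OF \<psi>] \<open>T \<subseteq> {0..<n}\<close> by blast
  with iso_betw_subset[OF \<psi> prefix] show "graph_iso {0..<n} E {0..<n} E'"
    by (rule deck_reconstruction.graph_iso[OF deck_reconstruction.intro[OF E' size rigid separating deck]])
qed

section \<open>Counting graphs without a rigid, separating prefix\<close>

lemma card_le_two_pow_if_determined:
  fixes rank :: "'a \<Rightarrow> nat"
  assumes U: "finite U" and QU: "Q \<subseteq> U" and SU: "S \<subseteq> Pow U"
    and determined: "\<And>q. q \<in> Q \<Longrightarrow> \<exists>z. rank z < rank q \<and> (\<forall>E\<in>S. q \<in> E \<longleftrightarrow> z \<in> E)"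
  shows "real (card S) \<le> 2 ^ card U / 2 ^ card Q"
proof -
  have "inj_on (\<lambda>E. E - Q) S"
  proof (rule inj_onI)
    fix E1 E2 assume E: "E1 \<in> S" "E2 \<in> S" and eq: "E1 - Q = E2 - Q"
    have "q \<in> E1 \<longleftrightarrow> q \<in> E2" for q
    proof (induction "rank q" arbitrary: q rule: less_induct)
      case less
      show ?case
      proof (cases "q \<in> Q")
        case True
        then obtain z where "rank z < rank q" "\<forall>E\<in>S. q \<in> E \<longleftrightarrow> z \<in> E"
          using determined by blast
        then show ?thesis
          using less E by blast
      qed (use eq in blast)
    qed
    then show "E1 = E2"
      by blast
  qed
  then have "card S = card ((\<lambda>E. E - Q) ` S)"
    by (simp add: card_image)
  also have "\<dots> \<le> card (Pow (U - Q))"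
    using SU U by (intro card_mono) auto
  also have "\<dots> = 2 ^ (card U - card Q)"
    using U QU by (simp add: card_Pow card_Diff_subset finite_subset)
  finally have "real (card S) \<le> real (2 ^ (card U - card Q))"
    by (rule of_nat_mono)
  also have "\<dots> = 2 ^ card U / 2 ^ card Q"
    using card_mono[OF U QU] by (simp only: of_nat_power of_nat_numeral) (simp add: power_diff)
  finally show ?thesis .
qed

lemma card_mult_le_double_count:
  assumes P: "finite P" "\<And>p. p \<in> P \<Longrightarrow> card p = 2" and M: "finite M"
    and c: "\<And>x. x \<in> M \<Longrightarrow> c \<le> card {p \<in> P. x \<in> p}"
  shows "card M * c \<le> 2 * card P"
proof -
  have "card M * c \<le> (\<Sum>x\<in>M. card {p \<in> P. x \<in> p})"
    using sum_mono[of M "\<lambda>_. c", OF c] by simp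
  also have "\<dots> = (\<Sum>x\<in>M. \<Sum>p\<in>P. of_bool (x \<in> p))"
    using P(1) by (simp add: sum.inter_filter[symmetric] Int_def)
  also have "\<dots> = (\<Sum>p\<in>P. \<Sum>x\<in>M. of_bool (x \<in> p))"
    by (rule sum.swap)
  also have "\<dots> = (\<Sum>p\<in>P. card (M \<inter> p))"
    using M by (simp add: sum.inter_filter[symmetric] Int_def)
  also have "\<dots> \<le> (\<Sum>p\<in>P. card p)"
    using P by (intro sum_mono card_mono) (auto intro: card_ge_0_finite)
  also have "\<dots> = 2 * card P"
    using P(2) by simp
  finally show ?thesis .
qed

lemma card_subset_UN_le:
  assumes "finite I" "\<And>i. i \<in> I \<Longrightarrow> finite (A i)" "S \<subseteq> (\<Union>i\<in>I. A i)"
  shows "card S \<le> (\<Sum>i\<in>I. card (A i))"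
proof -
  have "card S \<le> card (\<Union>i\<in>I. A i)"
    using assms by (intro card_mono) auto
  also have "\<dots> \<le> (\<Sum>i\<in>I. card (A i))"
    by (rule card_UN_le[OF assms(1)])
  finally show ?thesis .
qed

lemma set_encode_less_two_pow: "A \<subseteq> {0..<k} \<Longrightarrow> set_encode A < 2 ^ k"
proof -
  assume "A \<subseteq> {0..<k}"
  then have "set_encode A \<le> (\<Sum>i=0..<k. 2 ^ i)"
    unfolding set_encode_def by (intro sum_mono2) auto
  also have "\<dots> < 2 ^ k"
    by (simp add: sum_power2)
  finally show ?thesis .
qed

lemma two_pow_le_set_encode: "finite A \<Longrightarrow> x \<in> A \<Longrightarrow> 2 ^ x \<le> set_encode A"
  unfolding set_encode_def by (rule member_le_sum) auto

lemma finite_all_pairs: "finite (all_pairs n)"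
  unfolding all_pairs_def by (rule finite_subset[of _ "Pow {0..<n}"]) auto

lemma finite_labeled_graphs: "finite (labeled_graphs n)"
  unfolding labeled_graphs_def by (simp add: finite_all_pairs)

lemma card_labeled_graphs: "card (labeled_graphs n) = 2 ^ card (all_pairs n)"
  unfolding labeled_graphs_def by (rule card_Pow[OF finite_all_pairs])

lemma doubleton_mem_all_pairs: "x < n \<Longrightarrow> y < n \<Longrightarrow> x \<noteq> y \<Longrightarrow> {x, y} \<in> all_pairs n"
  unfolding all_pairs_def by auto

lemma all_pairs_mono: "k \<le> n \<Longrightarrow> all_pairs k \<subseteq> all_pairs n"
  unfolding all_pairs_def by auto

lemma all_pairsE:
  assumes "p \<in> all_pairs k"
  obtains x y where "x < k" "y < k" "x \<noteq> y" "p = {x, y}"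
proof -
  obtain x y where "p = {x, y}" "x \<noteq> y"
    using assms unfolding all_pairs_def card_2_iff by blast
  moreover have "x < k" "y < k"
    using assms calculation(1) unfolding all_pairs_def by auto
  ultimately show ?thesis
    using that by blast
qed

text \<open>The exponent contributed by \<open>\<sigma> x = y\<close> in the bound for a fixed \<open>\<sigma>\<close>; the weight \<open>2\<close> for
  leaving the prefix pays for the \<open>n\<close> possible images outside it.\<close>
definition displacement :: "nat \<Rightarrow> nat \<Rightarrow> nat \<Rightarrow> nat" where
  "displacement k x y = (if y = x then 0 else if y < k then 1 else 2)"

lemma card_le_card_pairs_containing:
  assumes "finite P" "x \<notin> Y" "\<And>y. y \<in> Y \<Longrightarrow> {x, y} \<in> P"
  shows "card Y \<le> card {p \<in> P. x \<in> p}"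
proof (rule card_inj_on_le)
  show "inj_on (\<lambda>y. {x, y}) Y"
    using assms(2) by (intro inj_onI) (auto simp: doubleton_eq_iff)
qed (use assms in auto)

locale prefix_map =
  fixes n k :: nat and \<sigma> :: "nat \<Rightarrow> nat"
  assumes size: "k \<le> n" and maps_to: "\<sigma> ` {0..<k} \<subseteq> {0..<n}" and inj: "inj_on \<sigma> {0..<k}"
begin

definition moved_pairs :: "nat set set" where
  "moved_pairs = {p \<in> all_pairs k. \<sigma> ` p \<noteq> p}"

definition escaping_pairs :: "nat set set" where
  "escaping_pairs = {p \<in> all_pairs k. \<not> \<sigma> ` p \<subseteq> {0..<k}}"

text \<open>On graphs embedding the prefix via \<open>\<sigma>\<close>, a moved pair \<open>p\<close> and \<open>\<sigma> ` p\<close> are both edges or both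
  non-edges, so the later of the two in the \<open>set_encode\<close> order is determined by the earlier.
  That order lists all pairs inside the prefix first.\<close>
definition upper :: "nat set \<Rightarrow> nat set" where
  "upper p = (if set_encode p < set_encode (\<sigma> ` p) then \<sigma> ` p else p)"

definition forced_pairs :: "nat set set" where
  "forced_pairs = upper ` moved_pairs"

lemma image_mem_all_pairs:
  assumes "p \<in> all_pairs k"
  shows "\<sigma> ` p \<in> all_pairs n"
proof -
  obtain x y where xy: "x < k" "y < k" "x \<noteq> y" "p = {x, y}"
    using assms by (rule all_pairsE)
  then have "\<sigma> x \<noteq> \<sigma> y"
    using inj_onD[OF inj, of x y] by auto
  moreover have "\<sigma> x < n" "\<sigma> y < n"
    using maps_to xy(1,2) by (auto simp: image_subset_iff)
  ultimately show ?thesis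
    using xy(4) doubleton_mem_all_pairs by simp
qed

lemma inj_on_image_all_pairs: "inj_on ((`) \<sigma>) (all_pairs k)"
proof (rule inj_onI)
  fix p q assume "p \<in> all_pairs k" "q \<in> all_pairs k" "\<sigma> ` p = \<sigma> ` q"
  then show "p = q"
    using inj_on_image_eq_iff[OF inj, of p q] unfolding all_pairs_def by blast
qed

lemma pair_mem_iff_image_mem:
  assumes "embeds_prefix E k \<sigma>" "p \<in> all_pairs k"
  shows "p \<in> E \<longleftrightarrow> \<sigma> ` p \<in> E"
  using assms(2) by (elim all_pairsE) (use assms(1) in \<open>simp add: embeds_prefix_def\<close>)

lemma forced_pairs_subset: "forced_pairs \<subseteq> all_pairs n"
proof
  fix q assume "q \<in> forced_pairs"
  then obtain p where "p \<in> all_pairs k" "q = upper p"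
    unfolding forced_pairs_def moved_pairs_def by blast
  then show "q \<in> all_pairs n"
    using image_mem_all_pairs all_pairs_mono[OF size] unfolding upper_def by auto
qed

lemma card_embedding_graphs_le:
  "real (card {E \<in> labeled_graphs n. embeds_prefix E k \<sigma>}) \<le> 2 ^ card (all_pairs n) / 2 ^ card forced_pairs"
proof (rule card_le_two_pow_if_determined[OF finite_all_pairs, where rank = set_encode])
  show "forced_pairs \<subseteq> all_pairs n"
    by (rule forced_pairs_subset)
  show "{E \<in> labeled_graphs n. embeds_prefix E k \<sigma>} \<subseteq> Pow (all_pairs n)"
    unfolding labeled_graphs_def by blast
next
  fix q assume "q \<in> forced_pairs"
  then obtain p where p: "p \<in> all_pairs k" "\<sigma> ` p \<noteq> p" and q: "q = upper p"
    unfolding forced_pairs_def moved_pairs_def by blast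
  have "finite p"
    using p(1) unfolding all_pairs_def by (auto intro: card_ge_0_finite)
  then have "set_encode (\<sigma> ` p) \<noteq> set_encode p"
    using p(2) by (simp add: set_encode_eq)
  then have "set_encode (if q = p then \<sigma> ` p else p) < set_encode q"
    unfolding q upper_def by auto
  moreover have "\<forall>E \<in> {E \<in> labeled_graphs n. embeds_prefix E k \<sigma>}.
      q \<in> E \<longleftrightarrow> (if q = p then \<sigma> ` p else p) \<in> E"
    using pair_mem_iff_image_mem[OF _ p(1)] unfolding q upper_def by auto
  ultimately show "\<exists>z. set_encode z < set_encode q \<and>
      (\<forall>E \<in> {E \<in> labeled_graphs n. embeds_prefix E k \<sigma>}. q \<in> E \<longleftrightarrow> z \<in> E)"
    by blast
qed

lemma card_moved_escaping_pairs_le: "card moved_pairs + card escaping_pairs \<le> 2 * card forced_pairs"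
proof -
  define ascending where "ascending = {p \<in> moved_pairs. set_encode p < set_encode (\<sigma> ` p)}"
  have fin: "finite moved_pairs" "finite escaping_pairs" "finite forced_pairs"
    using finite_all_pairs[of k] unfolding moved_pairs_def escaping_pairs_def forced_pairs_def by auto
  have inj_asc: "inj_on ((`) \<sigma>) ascending" and inj_esc: "inj_on ((`) \<sigma>) escaping_pairs"
    using inj_on_subset[OF inj_on_image_all_pairs]
    unfolding ascending_def moved_pairs_def escaping_pairs_def by auto
  have "card ascending = card ((`) \<sigma> ` ascending)"
    using inj_asc by (simp add: card_image)
  also have "\<dots> \<le> card forced_pairs"
    using fin(3) by (intro card_mono) (auto simp: ascending_def forced_pairs_def upper_def)
  finally have asc: "card ascending \<le> card forced_pairs" .
  have "escaping_pairs \<subseteq> ascending"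
  proof
    fix p assume p: "p \<in> escaping_pairs"
    then obtain x where x: "x \<in> p" "k \<le> \<sigma> x"
      unfolding escaping_pairs_def by (auto simp: image_subset_iff not_less)
    have pk: "p \<subseteq> {0..<k}" "finite p"
      using p unfolding escaping_pairs_def all_pairs_def by (auto intro: card_ge_0_finite)
    have "set_encode p < 2 ^ k"
      using pk(1) by (rule set_encode_less_two_pow)
    also have "\<dots> \<le> 2 ^ \<sigma> x"
      using x(2) by simp
    also have "\<dots> \<le> set_encode (\<sigma> ` p)"
      using x(1) pk(2) by (intro two_pow_le_set_encode) auto
    finally show "p \<in> ascending"
      using p unfolding ascending_def moved_pairs_def escaping_pairs_def by auto
  qed
  then have "card escaping_pairs + card (moved_pairs - ascending) =
      card ((`) \<sigma> ` escaping_pairs \<union> (moved_pairs - ascending))"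
    using fin inj_esc
    by (subst card_Un_disjoint) (auto simp: card_image moved_pairs_def escaping_pairs_def all_pairs_def)
  also have "\<dots> \<le> card forced_pairs"
    using fin(3) \<open>escaping_pairs \<subseteq> ascending\<close>
    by (intro card_mono) (auto simp: ascending_def forced_pairs_def upper_def)
  finally have "card escaping_pairs + card (moved_pairs - ascending) \<le> card forced_pairs" .
  moreover have "card moved_pairs = card ascending + card (moved_pairs - ascending)"
    using fin(1) card_Diff_subset[of ascending moved_pairs] card_mono[of moved_pairs ascending]
    unfolding ascending_def by (auto intro: finite_subset)
  ultimately show ?thesis
    using asc by linarith
qed

lemma card_moved_points_le: "card {x \<in> {0..<k}. \<sigma> x \<noteq> x} * (k - 2) \<le> 2 * card moved_pairs"
proof (rule card_mult_le_double_count)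
  show "finite moved_pairs"
    using finite_all_pairs[of k] unfolding moved_pairs_def by simp
  show "card p = 2" if "p \<in> moved_pairs" for p
    using that unfolding moved_pairs_def all_pairs_def by simp
  fix x assume x: "x \<in> {x \<in> {0..<k}. \<sigma> x \<noteq> x}"
  have "card {x, \<sigma> x} \<le> 2"
    by (cases "\<sigma> x = x") auto
  then have "k - 2 \<le> card ({0..<k} - {x, \<sigma> x})"
    using diff_card_le_card_Diff[of "{x, \<sigma> x}" "{0..<k}"] by simp
  also have "\<dots> \<le> card {p \<in> moved_pairs. x \<in> p}"
  proof (rule card_le_card_pairs_containing)
    show "finite moved_pairs"
      using finite_all_pairs[of k] unfolding moved_pairs_def by simp
    fix y assume y: "y \<in> {0..<k} - {x, \<sigma> x}"
    then have "\<sigma> ` {x, y} \<noteq> {x, y}"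
      using x by (auto simp: doubleton_eq_iff)
    then show "{x, y} \<in> moved_pairs"
      using x y unfolding moved_pairs_def by (auto intro: doubleton_mem_all_pairs)
  qed simp
  finally show "k - 2 \<le> card {p \<in> moved_pairs. x \<in> p}" .
qed simp

lemma card_escaping_points_le: "card {x \<in> {0..<k}. k \<le> \<sigma> x} * (k - 1) \<le> 2 * card escaping_pairs"
proof (rule card_mult_le_double_count)
  show "finite escaping_pairs"
    using finite_all_pairs[of k] unfolding escaping_pairs_def by simp
  show "card p = 2" if "p \<in> escaping_pairs" for p
    using that unfolding escaping_pairs_def all_pairs_def by simp
  fix x assume x: "x \<in> {x \<in> {0..<k}. k \<le> \<sigma> x}"
  then have "k - 1 = card ({0..<k} - {x})"
    by simp
  also have "\<dots> \<le> card {p \<in> escaping_pairs. x \<in> p}"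
  proof (rule card_le_card_pairs_containing)
    show "finite escaping_pairs"
      using finite_all_pairs[of k] unfolding escaping_pairs_def by simp
    fix y assume "y \<in> {0..<k} - {x}"
    then show "{x, y} \<in> escaping_pairs"
      using x unfolding escaping_pairs_def by (auto intro: doubleton_mem_all_pairs)
  qed simp
  finally show "k - 1 \<le> card {p \<in> escaping_pairs. x \<in> p}" .
qed simp

lemma sum_displacement:
  "(\<Sum>x\<in>{0..<k}. displacement k x (\<sigma> x)) = card {x \<in> {0..<k}. \<sigma> x \<noteq> x} + card {x \<in> {0..<k}. k \<le> \<sigma> x}"
proof -
  have "displacement k x (\<sigma> x) = of_bool (\<sigma> x \<noteq> x) + of_bool (k \<le> \<sigma> x)" if "x < k" for x
    using that unfolding displacement_def by auto
  then have "(\<Sum>x\<in>{0..<k}. displacement k x (\<sigma> x)) =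
      (\<Sum>x\<in>{0..<k}. of_bool (\<sigma> x \<noteq> x)) + (\<Sum>x\<in>{0..<k}. of_bool (k \<le> \<sigma> x))"
    by (simp add: sum.distrib)
  also have "\<dots> = card {x \<in> {0..<k}. \<sigma> x \<noteq> x} + card {x \<in> {0..<k}. k \<le> \<sigma> x}"
    by (simp add: Int_def)
  finally show ?thesis .
qed

lemma sum_displacement_le_forced_pairs:
  "(\<Sum>x\<in>{0..<k}. displacement k x (\<sigma> x)) * (k - 2) \<le> 4 * card forced_pairs"
proof -
  have "card {x \<in> {0..<k}. k \<le> \<sigma> x} * (k - 2) \<le> card {x \<in> {0..<k}. k \<le> \<sigma> x} * (k - 1)"
    by (rule mult_le_mono2) simp
  then have "(\<Sum>x\<in>{0..<k}. displacement k x (\<sigma> x)) * (k - 2) \<le>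
      2 * card moved_pairs + 2 * card escaping_pairs"
    using card_moved_points_le card_escaping_points_le
    unfolding sum_displacement add_mult_distrib by linarith
  then show ?thesis
    using card_moved_escaping_pairs_le by simp
qed

lemma card_embedding_graphs_le_displacement:
  assumes "2 \<le> k"
  shows "real (card {E \<in> labeled_graphs n. embeds_prefix E k \<sigma>}) \<le>
    2 ^ card (all_pairs n) * (\<Prod>x\<in>{0..<k}. (2 powr (- (real k - 2) / 4)) ^ displacement k x (\<sigma> x))"
proof -
  define d where "d = (\<Sum>x\<in>{0..<k}. displacement k x (\<sigma> x))"
  have "real (d * (k - 2)) \<le> real (4 * card forced_pairs)"
    unfolding d_def of_nat_le_iff by (rule sum_displacement_le_forced_pairs)
  then have "2 powr (- real (card forced_pairs)) \<le> 2 powr (- (real k - 2) / 4 * real d)"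
    using assms by (intro powr_mono) (auto simp: of_nat_diff algebra_simps)
  also have "\<dots> = (2 powr (- (real k - 2) / 4)) ^ d"
    by (simp add: powr_power mult.commute)
  also have "\<dots> = (\<Prod>x\<in>{0..<k}. (2 powr (- (real k - 2) / 4)) ^ displacement k x (\<sigma> x))"
    unfolding d_def by (rule power_sum)
  finally have weight: "2 powr (- real (card forced_pairs)) \<le>
      (\<Prod>x\<in>{0..<k}. (2 powr (- (real k - 2) / 4)) ^ displacement k x (\<sigma> x))" .
  have "real (card {E \<in> labeled_graphs n. embeds_prefix E k \<sigma>}) \<le>
      2 ^ card (all_pairs n) / 2 ^ card forced_pairs"
    by (rule card_embedding_graphs_le)
  also have "\<dots> = 2 ^ card (all_pairs n) * 2 powr (- real (card forced_pairs))"
    by (simp add: powr_minus powr_realpow divide_inverse)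
  also have "\<dots> \<le> 2 ^ card (all_pairs n) *
      (\<Prod>x\<in>{0..<k}. (2 powr (- (real k - 2) / 4)) ^ displacement k x (\<sigma> x))"
    using weight by simp
  finally show ?thesis .
qed

end

lemma sum_displacement_weight_le:
  fixes a :: real
  assumes "0 \<le> a" "x < k" "k \<le> n"
  shows "(\<Sum>y\<in>{0..<n}. a ^ displacement k x y) \<le> 1 + real k * a + real n * a\<^sup>2"
proof -
  have "(\<Sum>y\<in>{0..<n}. a ^ displacement k x y) \<le> (\<Sum>y\<in>{0..<n}. of_bool (y = x) + of_bool (y < k) * a + a\<^sup>2)"
    using assms(1) by (intro sum_mono) (auto simp: displacement_def)
  also have "\<dots> = card ({0..<n} \<inter> {x}) + card ({0..<n} \<inter> {0..<k}) * a + real n * a\<^sup>2"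
    by (simp add: sum.distrib sum_distrib_right Int_def)
  also have "\<dots> = 1 + real k * a + real n * a\<^sup>2"
    using assms(2,3) by (simp add: Int_absorb1 insert_absorb)
  finally show ?thesis .
qed

lemma sum_PiE_displacement_weight_le:
  fixes a :: real
  assumes "0 \<le> a" "k \<le> n"
  shows "(\<Sum>\<tau>\<in>{0..<k} \<rightarrow>\<^sub>E {0..<n}. \<Prod>x\<in>{0..<k}. a ^ displacement k x (\<tau> x)) \<le>
    (1 + real k * a + real n * a\<^sup>2) ^ k"
proof -
  have "(\<Sum>\<tau>\<in>{0..<k} \<rightarrow>\<^sub>E {0..<n}. \<Prod>x\<in>{0..<k}. a ^ displacement k x (\<tau> x)) =
      (\<Prod>x\<in>{0..<k}. \<Sum>y\<in>{0..<n}. a ^ displacement k x y)"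
    by (rule prod_sum_PiE[symmetric]) auto
  also have "\<dots> \<le> (\<Prod>x\<in>{0..<k}. 1 + real k * a + real n * a\<^sup>2)"
    using sum_displacement_weight_le[OF assms(1) _ assms(2)] assms(1)
    by (intro prod_mono) (auto intro: sum_nonneg)
  finally show ?thesis
    by simp
qed

lemma not_rigid_prefix_imp_embedding:
  assumes "\<not> rigid_prefix n k E"
  obtains \<tau> where "\<tau> \<in> ({0..<k} \<rightarrow>\<^sub>E {0..<n}) - {restrict id {0..<k}}" "inj_on \<tau> {0..<k}"
    "embeds_prefix E k \<tau>"
proof -
  obtain \<sigma> x where \<sigma>: "\<sigma> ` {0..<k} \<subseteq> {0..<n}" "inj_on \<sigma> {0..<k}" "embeds_prefix E k \<sigma>"
    and x: "x < k" "\<sigma> x \<noteq> x"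
    using assms unfolding rigid_prefix_def by blast
  have "restrict \<sigma> {0..<k} \<in> ({0..<k} \<rightarrow>\<^sub>E {0..<n}) - {restrict id {0..<k}}"
    using \<sigma>(1) x by (auto dest: fun_cong[of _ _ x])
  moreover have "inj_on (restrict \<sigma> {0..<k}) {0..<k}" "embeds_prefix E k (restrict \<sigma> {0..<k})"
    using \<sigma>(2,3) by (auto simp: inj_on_def embeds_prefix_def)
  ultimately show ?thesis
    using that by blast
qed

lemma card_not_rigid_prefix_le:
  assumes "k \<le> n" "2 \<le> k"
  defines "a \<equiv> 2 powr (- (real k - 2) / 4)"
  shows "real (card {E \<in> labeled_graphs n. \<not> rigid_prefix n k E}) \<le>
    2 ^ card (all_pairs n) * ((1 + real k * a + real n * a\<^sup>2) ^ k - 1)"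
proof -
  define maps where "maps = ({0..<k} \<rightarrow>\<^sub>E {0..<n}) - {restrict id {0..<k}}"
  define weight where "weight \<tau> = (\<Prod>x\<in>{0..<k}. a ^ displacement k x (\<tau> x))" for \<tau>
  have fin: "finite maps"
    unfolding maps_def by (simp add: finite_PiE)
  have "{E \<in> labeled_graphs n. \<not> rigid_prefix n k E} \<subseteq>
      (\<Union>\<tau>\<in>{\<tau> \<in> maps. inj_on \<tau> {0..<k}}. {E \<in> labeled_graphs n. embeds_prefix E k \<tau>})"
  proof
    fix E assume "E \<in> {E \<in> labeled_graphs n. \<not> rigid_prefix n k E}"
    then have E: "E \<in> labeled_graphs n" "\<not> rigid_prefix n k E"
      by auto
    obtain \<tau> where "\<tau> \<in> maps" "inj_on \<tau> {0..<k}" "embeds_prefix E k \<tau>"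
      unfolding maps_def by (rule not_rigid_prefix_imp_embedding[OF E(2)])
    with E(1) show "E \<in> (\<Union>\<tau>\<in>{\<tau> \<in> maps. inj_on \<tau> {0..<k}}. {E \<in> labeled_graphs n. embeds_prefix E k \<tau>})"
      by blast
  qed
  then have "card {E \<in> labeled_graphs n. \<not> rigid_prefix n k E} \<le>
      (\<Sum>\<tau>\<in>{\<tau> \<in> maps. inj_on \<tau> {0..<k}}. card {E \<in> labeled_graphs n. embeds_prefix E k \<tau>})"
    by (rule card_subset_UN_le[rotated 2]) (simp_all add: fin finite_labeled_graphs)
  then have "real (card {E \<in> labeled_graphs n. \<not> rigid_prefix n k E}) \<le>
      (\<Sum>\<tau>\<in>{\<tau> \<in> maps. inj_on \<tau> {0..<k}}. real (card {E \<in> labeled_graphs n. embeds_prefix E k \<tau>}))"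
    unfolding of_nat_sum[symmetric] by (rule of_nat_mono)
  also have "\<dots> \<le> (\<Sum>\<tau>\<in>{\<tau> \<in> maps. inj_on \<tau> {0..<k}}. 2 ^ card (all_pairs n) * weight \<tau>)"
  proof (rule sum_mono)
    fix \<tau> assume "\<tau> \<in> {\<tau> \<in> maps. inj_on \<tau> {0..<k}}"
    then have "prefix_map n k \<tau>"
      using assms(1) unfolding maps_def by unfold_locales auto
    then show "real (card {E \<in> labeled_graphs n. embeds_prefix E k \<tau>}) \<le> 2 ^ card (all_pairs n) * weight \<tau>"
      unfolding weight_def a_def by (rule prefix_map.card_embedding_graphs_le_displacement[OF _ assms(2)])
  qed
  also have "\<dots> \<le> (\<Sum>\<tau>\<in>maps. 2 ^ card (all_pairs n) * weight \<tau>)"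
    using fin by (intro sum_mono2) (auto simp: weight_def a_def intro!: prod_nonneg mult_nonneg_nonneg)
  also have "\<dots> = 2 ^ card (all_pairs n) * ((\<Sum>\<tau>\<in>{0..<k} \<rightarrow>\<^sub>E {0..<n}. weight \<tau>) - 1)"
    using assms(1) unfolding maps_def
    by (simp add: sum_diff1 finite_PiE weight_def displacement_def right_diff_distrib flip: sum_distrib_left)
  also have "\<dots> \<le> 2 ^ card (all_pairs n) * ((1 + real k * a + real n * a\<^sup>2) ^ k - 1)"
    using sum_PiE_displacement_weight_le[OF _ assms(1), of a] unfolding weight_def a_def by simp
  finally show ?thesis .
qed

lemma card_equal_prefix_nbhd_le:
  assumes "k \<le> u" "u < n" "k \<le> v" "v < n" "u \<noteq> v"
  shows "real (card {E \<in> labeled_graphs n. prefix_nbhd E k u = prefix_nbhd E k v}) \<le>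
    2 ^ card (all_pairs n) / 2 ^ k"
proof -
  define Q where "Q = (\<lambda>b. {b, v}) ` {0..<k}"
  have "inj_on (\<lambda>b. {b, v}) {0..<k}"
  proof (rule inj_onI)
    fix b b' assume "b \<in> {0..<k}" "b' \<in> {0..<k}" "{b, v} = {b', v}"
    then show "b = b'"
      using assms(3) by (metis atLeastLessThan_iff doubleton_eq_iff not_le)
  qed
  then have "card Q = k"
    unfolding Q_def by (simp add: card_image)
  have "Q \<subseteq> all_pairs n"
    unfolding Q_def using assms(3,4) by (auto intro!: doubleton_mem_all_pairs)
  have "real (card {E \<in> labeled_graphs n. prefix_nbhd E k u = prefix_nbhd E k v}) \<le>
      2 ^ card (all_pairs n) / 2 ^ card Q"
  proof (rule card_le_two_pow_if_determined[OF finite_all_pairs \<open>Q \<subseteq> all_pairs n\<close>,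
        where rank = "\<lambda>q. of_bool (q \<in> Q)"])
    show "{E \<in> labeled_graphs n. prefix_nbhd E k u = prefix_nbhd E k v} \<subseteq> Pow (all_pairs n)"
      unfolding labeled_graphs_def by blast
  next
    fix q assume "q \<in> Q"
    then obtain b where b: "b < k" "q = {b, v}"
      unfolding Q_def by auto
    have "{b, u} \<notin> Q"
    proof
      assume "{b, u} \<in> Q"
      then obtain b' where "b' < k" "{b, u} = {b', v}"
        unfolding Q_def by auto
      then show False
        using assms(1,5) b(1) by (metis doubleton_eq_iff not_le)
    qed
    moreover have "q \<in> E \<longleftrightarrow> {b, u} \<in> E" if "prefix_nbhd E k u = prefix_nbhd E k v" for E
    proof -
      have "b \<in> prefix_nbhd E k u \<longleftrightarrow> b \<in> prefix_nbhd E k v"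
        using that by simp
      then show ?thesis
        using b unfolding prefix_nbhd_def by simp
    qed
    ultimately show "\<exists>z. of_bool (z \<in> Q) < (of_bool (q \<in> Q) :: nat) \<and>
        (\<forall>E \<in> {E \<in> labeled_graphs n. prefix_nbhd E k u = prefix_nbhd E k v}. q \<in> E \<longleftrightarrow> z \<in> E)"
      using \<open>q \<in> Q\<close> by (intro exI[of _ "{b, u}"]) simp
  qed
  with \<open>card Q = k\<close> show ?thesis
    by simp
qed

lemma card_not_separating_prefix_le:
  assumes "k \<le> n"
  shows "real (card {E \<in> labeled_graphs n. \<not> separating_prefix n k E}) \<le>
    real n ^ 2 * 2 ^ card (all_pairs n) / 2 ^ k"
proof -
  define twins where "twins = {(u, v) \<in> {k..<n} \<times> {k..<n}. u \<noteq> v}"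
  define twin_graphs where
    "twin_graphs uv = {E \<in> labeled_graphs n. prefix_nbhd E k (fst uv) = prefix_nbhd E k (snd uv)}" for uv
  have fin: "finite twins"
    unfolding twins_def by (rule finite_subset[of _ "{k..<n} \<times> {k..<n}"]) auto
  have "{E \<in> labeled_graphs n. \<not> separating_prefix n k E} \<subseteq> (\<Union>uv\<in>twins. twin_graphs uv)"
    unfolding separating_prefix_def inj_on_def twins_def twin_graphs_def by fastforce
  then have "card {E \<in> labeled_graphs n. \<not> separating_prefix n k E} \<le> (\<Sum>uv\<in>twins. card (twin_graphs uv))"
    by (rule card_subset_UN_le[OF fin, rotated]) (simp add: twin_graphs_def finite_labeled_graphs)
  then have "real (card {E \<in> labeled_graphs n. \<not> separating_prefix n k E}) \<le>
      (\<Sum>uv\<in>twins. real (card (twin_graphs uv)))"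
    unfolding of_nat_sum[symmetric] by (rule of_nat_mono)
  also have "\<dots> \<le> (\<Sum>uv\<in>twins. 2 ^ card (all_pairs n) / 2 ^ k)"
  proof (rule sum_mono)
    fix uv assume "uv \<in> twins"
    then show "real (card (twin_graphs uv)) \<le> 2 ^ card (all_pairs n) / 2 ^ k"
      unfolding twins_def twin_graphs_def by (auto intro: card_equal_prefix_nbhd_le)
  qed
  also have "\<dots> \<le> real n ^ 2 * 2 ^ card (all_pairs n) / 2 ^ k"
  proof -
    have "card twins \<le> card ({0..<n} \<times> {0..<n})"
      unfolding twins_def by (intro card_mono) auto
    then have "real (card twins) \<le> real n ^ 2"
      by (simp add: power2_eq_square flip: of_nat_mult)
    then show ?thesis
      by (simp add: divide_right_mono mult_right_mono)
  qed
  finally show ?thesis .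
qed

section \<open>Asymptotics\<close>

definition deck_determined_fraction :: "nat \<Rightarrow> nat \<Rightarrow> real" where
  "deck_determined_fraction n m =
     real (card {E \<in> labeled_graphs n. determined_by_deck n m E}) / real (card (labeled_graphs n))"

lemma deck_determined_fraction_le_1: "deck_determined_fraction n m \<le> 1"
proof -
  have "card {E \<in> labeled_graphs n. determined_by_deck n m E} \<le> card (labeled_graphs n)"
    by (rule card_mono[OF finite_labeled_graphs]) blast
  then show ?thesis
    unfolding deck_determined_fraction_def by (simp add: card_labeled_graphs)
qed

lemma deck_determined_fraction_ge:
  assumes "k + 2 \<le> n" "2 \<le> k"
  defines "a \<equiv> 2 powr (- (real k - 2) / 4)"
  shows "2 - (1 + real k * a + real n * a\<^sup>2) ^ k - real n ^ 2 / 2 ^ k \<le> deck_determined_fraction n (k + 2)"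
proof -
  have "labeled_graphs n \<subseteq> {E \<in> labeled_graphs n. determined_by_deck n (k + 2) E} \<union>
      {E \<in> labeled_graphs n. \<not> rigid_prefix n k E} \<union> {E \<in> labeled_graphs n. \<not> separating_prefix n k E}"
    using determined_by_deck_if_rigid_separating[OF _ assms(1)] by blast
  then have "card (labeled_graphs n) \<le> card ({E \<in> labeled_graphs n. determined_by_deck n (k + 2) E} \<union>
      {E \<in> labeled_graphs n. \<not> rigid_prefix n k E} \<union> {E \<in> labeled_graphs n. \<not> separating_prefix n k E})"
    by (rule card_mono[rotated]) (simp add: finite_labeled_graphs)
  also have "\<dots> \<le> card {E \<in> labeled_graphs n. determined_by_deck n (k + 2) E} +
      card {E \<in> labeled_graphs n. \<not> rigid_prefix n k E} + card {E \<in> labeled_graphs n. \<not> separating_prefix n k E}"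
    by (meson add_right_mono card_Un_le order_trans)
  finally have "real (card (labeled_graphs n)) \<le> real (card {E \<in> labeled_graphs n. determined_by_deck n (k + 2) E}) +
      real (card {E \<in> labeled_graphs n. \<not> rigid_prefix n k E}) +
      real (card {E \<in> labeled_graphs n. \<not> separating_prefix n k E})"
    by linarith
  moreover have "real (card {E \<in> labeled_graphs n. \<not> rigid_prefix n k E}) \<le>
      2 ^ card (all_pairs n) * ((1 + real k * a + real n * a\<^sup>2) ^ k - 1)"
    using card_not_rigid_prefix_le[of k n] assms(1,2) unfolding a_def by simp
  moreover have "real (card {E \<in> labeled_graphs n. \<not> separating_prefix n k E}) \<le>
      real n ^ 2 * 2 ^ card (all_pairs n) / 2 ^ k"
    using card_not_separating_prefix_le[of k n] assms(1) by simp
  ultimately have "2 ^ card (all_pairs n) \<le> real (card {E \<in> labeled_graphs n. determined_by_deck n (k + 2) E}) +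
      2 ^ card (all_pairs n) * ((1 + real k * a + real n * a\<^sup>2) ^ k - 1) +
      real n ^ 2 * 2 ^ card (all_pairs n) / 2 ^ k"
    unfolding card_labeled_graphs by simp
  then show ?thesis
    unfolding deck_determined_fraction_def card_labeled_graphs by (simp add: field_simps)
qed

text \<open>Bounds both error terms of \<open>deck_determined_fraction_ge\<close> when \<open>k + 2 = \<lfloor>3 log\<^sub>2 x\<rfloor>\<close>,
  using \<open>a \<le> 2 powr (5/4) * x powr (-3/4)\<close>, \<open>k \<le> 3 log\<^sub>2 x\<close> and \<open>2 ^ k \<ge> x ^ 3 / 8\<close>.\<close>
definition deck_error :: "real \<Rightarrow> real" where
  "deck_error x = exp (3 * log 2 x * (3 * log 2 x * (2 powr (5/4) * x powr (-3/4)) +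
     x * (2 powr (5/4) * x powr (-3/4))\<^sup>2)) - 1 + 8 / x"

lemma deck_error_tendsto_0: "(deck_error \<longlongrightarrow> 0) at_top"
  unfolding deck_error_def by real_asymp

lemma one_plus_power_le_exp:
  fixes x :: real
  assumes "-1 \<le> x"
  shows "(1 + x) ^ k \<le> exp (real k * x)"
proof -
  have "(1 + x) ^ k \<le> exp x ^ k"
    using assms by (intro power_mono) auto
  then show ?thesis
    by (simp add: exp_of_nat_mult)
qed

lemma square_div_two_pow_le:
  fixes x :: real
  assumes "0 < x" "3 * log 2 x - 3 \<le> real k"
  shows "x\<^sup>2 / 2 ^ k \<le> 8 / x"
proof -
  have "x ^ 3 / 8 = (2 powr log 2 x) ^ 3 / 8"
    using assms(1) by simp
  also have "\<dots> = 2 powr (3 * log 2 x - 3)"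
    by (simp add: powr_diff powr_power mult.commute)
  also have "\<dots> \<le> 2 ^ k"
    using assms(2) by (simp add: powr_realpow[symmetric])
  finally have "x\<^sup>2 / 2 ^ k \<le> x\<^sup>2 / (x ^ 3 / 8)"
    using assms(1) by (intro divide_left_mono) auto
  also have "\<dots> = 8 / x"
    using assms(1) by (simp add: field_simps power2_eq_square power3_eq_cube)
  finally show ?thesis .
qed

lemma deck_determined_fraction_log_ge:
  assumes "4 \<le> 3 * log 2 (real n)" "3 * log 2 (real n) \<le> real n"
  shows "1 - deck_error (real n) \<le> deck_determined_fraction n (nat \<lfloor>3 * log 2 (real n)\<rfloor>)"
proof -
  define L where "L = log 2 (real n)"
  define k where "k = nat \<lfloor>3 * L\<rfloor> - 2"
  define a where "a = (2::real) powr (- (real k - 2) / 4)"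
  define \<epsilon> where "\<epsilon> = 2 powr (5/4) * real n powr (-3/4)"
  have n: "0 < real n"
    using assms(1) by (cases n) (auto simp: log_def)
  have k: "nat \<lfloor>3 * L\<rfloor> = k + 2" "3 * L - 3 \<le> real k" "real k \<le> 3 * L"
    using assms(1) unfolding k_def L_def by linarith+
  have "k + 2 \<le> n" "2 \<le> k"
    using k assms unfolding L_def by linarith+
  have "a \<le> 2 powr ((5 - 3 * L) / 4)"
    unfolding a_def using k by (intro powr_mono) auto
  also have "\<dots> = 2 powr (5/4) * (2 powr L) powr (-3/4)"
    by (simp add: powr_powr powr_add[symmetric] field_simps)
  also have "\<dots> = \<epsilon>"
    unfolding \<epsilon>_def L_def using n by simp
  finally have "a \<le> \<epsilon>" .
  have "0 \<le> a"
    unfolding a_def by simp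
  then have "0 \<le> real k * a + real n * a\<^sup>2"
    by simp
  then have "(1 + real k * a + real n * a\<^sup>2) ^ k \<le> exp (real k * (real k * a + real n * a\<^sup>2))"
    unfolding add.assoc by (intro one_plus_power_le_exp) linarith
  also have "\<dots> \<le> exp (3 * L * (3 * L * \<epsilon> + real n * \<epsilon>\<^sup>2))"
    using k n \<open>a \<le> \<epsilon>\<close> \<open>0 \<le> a\<close> by (intro exp_mono mult_mono add_mono mult_left_mono power_mono) auto
  finally have "(1 + real k * a + real n * a\<^sup>2) ^ k \<le> exp (3 * L * (3 * L * \<epsilon> + real n * \<epsilon>\<^sup>2))" .
  moreover have "real n ^ 2 / 2 ^ k \<le> 8 / real n"
    using square_div_two_pow_le[OF n] k(2) unfolding L_def by simp
  ultimately show ?thesis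
    using deck_determined_fraction_ge[OF \<open>k + 2 \<le> n\<close> \<open>2 \<le> k\<close>] k(1)
    unfolding deck_error_def L_def \<epsilon>_def a_def by simp
qed

theorem theorem1:
  shows "(\<lambda>n. real (card {E \<in> labeled_graphs n.
                determined_by_deck n (nat \<lfloor>3 * log 2 (real n)\<rfloor>) E})
            / real (card (labeled_graphs n))) \<longlonglongrightarrow> 1"
proof -
  have "eventually (\<lambda>x::real. 4 \<le> 3 * log 2 x) at_top" "eventually (\<lambda>x::real. 3 * log 2 x \<le> x) at_top"
    by real_asymp+
  then have "eventually (\<lambda>n. 4 \<le> 3 * log 2 (real n) \<and> 3 * log 2 (real n) \<le> real n) sequentially"
    by (rule eventually_compose_filterlim[OF eventually_conj filterlim_real_sequentially])
  then have lower: "eventually (\<lambda>n. 1 - deck_error (real n) \<le>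
      deck_determined_fraction n (nat \<lfloor>3 * log 2 (real n)\<rfloor>)) sequentially"
    by (rule eventually_mono) (use deck_determined_fraction_log_ge in blast)
  have limit: "(\<lambda>n. 1 - deck_error (real n)) \<longlonglongrightarrow> 1"
    using tendsto_diff[OF tendsto_const filterlim_compose[OF deck_error_tendsto_0 filterlim_real_sequentially]]
    by simp
  have "(\<lambda>n. deck_determined_fraction n (nat \<lfloor>3 * log 2 (real n)\<rfloor>)) \<longlonglongrightarrow> 1"
    by (rule tendsto_sandwich[OF lower _ limit tendsto_const])
      (intro always_eventually allI deck_determined_fraction_le_1)
  then show ?thesis
    unfolding deck_determined_fraction_def .
qed

end
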